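(* Let $\ell\ge 2$ and let $G$ be an $N$-AW graph of order $n$. Then: (1) no connected component of $\overline{G}$ is a path $P_k$ with $k\equiv 3\pmod 4$; (2) at most one connected component of $\overline{G}$ is a path $P_k$ with $k\equiv 1\pmod 4$; (3) if $G$ is $(n,\ell)$-extremal, then no connected component of $\overline{G}$ is a path with more than $4$ vertices.
   Context: All graphs are finite and simple; $\overline{G}$ is the complement; $P_k$ is the path on $k$ vertices. Labels lie in $\mathbb{Z}_\ell$. In the neighborhood Lights Out game, toggling a vertex $w$ adds $1$ (mod $\ell$) to the label of each vertex of the closed neighborhood $N[w]$; the game is won when all labels are $0$; a graph is $N$-AW if every initial labeling can be won. $\max(n,\ell)$ is the maximum number of edges of an $N$-AW graph on $n$ vertices, and an $(n,\ell)$-extremal graph is an $N$-AW graph on $n$ vertices with $\max(n,\ell)$ edges. *)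

theory Defs
  imports "HOL-Number_Theory.Cong"
begin

definition graph :: "'a set \<Rightarrow> ('a \<Rightarrow> 'a \<Rightarrow> bool) \<Rightarrow> bool" where
  "graph V E \<longleftrightarrow> finite V \<and> (\<forall>x y. E x y \<longrightarrow> x \<in> V \<and> y \<in> V)
      \<and> (\<forall>x y. E x y \<longrightarrow> E y x) \<and> (\<forall>x. \<not> E x x)"

definition edges :: "'a set \<Rightarrow> ('a \<Rightarrow> 'a \<Rightarrow> bool) \<Rightarrow> 'a set set" where
  "edges V E = {{x, y} | x y. x \<in> V \<and> y \<in> V \<and> E x y}"

definition compl_graph :: "'a set \<Rightarrow> ('a \<Rightarrow> 'a \<Rightarrow> bool) \<Rightarrow> ('a \<Rightarrow> 'a \<Rightarrow> bool)" where
  "compl_graph V E = (\<lambda>x y. x \<in> V \<and> y \<in> V \<and> x \<noteq> y \<and> \<not> E x y)"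

definition closed_nbhd :: "'a set \<Rightarrow> ('a \<Rightarrow> 'a \<Rightarrow> bool) \<Rightarrow> 'a \<Rightarrow> 'a set" where
  "closed_nbhd V E w = {u \<in> V. u = w \<or> E w u}"

text \<open>Neighbourhood Lights Out over Z_l: the game is won from labeling f if some
multiset of toggles (toggle counts t w, order is irrelevant) brings every label to 0
mod l. Toggling w adds 1 to each vertex of N[w]; so vertex v receives the sum of t w
over w with v in N[w].\<close>
definition N_AW :: "nat \<Rightarrow> 'a set \<Rightarrow> ('a \<Rightarrow> 'a \<Rightarrow> bool) \<Rightarrow> bool" where
  "N_AW l V E \<longleftrightarrow> (\<forall>f :: 'a \<Rightarrow> int. \<exists>t :: 'a \<Rightarrow> nat.
      \<forall>v \<in> V. [f v + (\<Sum>w \<in> {w \<in> V. v \<in> closed_nbhd V E w}. int (t w)) = 0] (mod int l))"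

text \<open>max(n,l): maximum number of edges of an N-AW graph on n vertices
(taken over graphs with natural-number vertices, which represent all graphs up to
isomorphism).\<close>
definition max_edges :: "nat \<Rightarrow> nat \<Rightarrow> nat" where
  "max_edges n l = Max {card (edges V E) | (V :: nat set) E.
       graph V E \<and> card V = n \<and> N_AW l V E}"

definition extremal :: "nat \<Rightarrow> nat \<Rightarrow> 'a set \<Rightarrow> ('a \<Rightarrow> 'a \<Rightarrow> bool) \<Rightarrow> bool" where
  "extremal n l V E \<longleftrightarrow> graph V E \<and> card V = n \<and> N_AW l V E
      \<and> card (edges V E) = max_edges n l"

definition component :: "'a set \<Rightarrow> ('a \<Rightarrow> 'a \<Rightarrow> bool) \<Rightarrow> 'a set \<Rightarrow> bool" where
  "component V E C \<longleftrightarrow> (\<exists>x \<in> V. C = {y. E\<^sup>*\<^sup>* x y})"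

definition is_path_on :: "('a \<Rightarrow> 'a \<Rightarrow> bool) \<Rightarrow> 'a set \<Rightarrow> nat \<Rightarrow> bool" where
  "is_path_on E C k \<longleftrightarrow> k \<ge> 1 \<and> (\<exists>p. bij_betw p {0..<k} C \<and>
      (\<forall>i<k. \<forall>j<k. E (p i) (p j) \<longleftrightarrow> (i = Suc j \<or> j = Suc i)))"

end

theory Submission
  imports Defs "HOL-Library.FuncSet"
begin

(*
  Being N-AW means that the closed-neighbourhood matrix N of G is onto modulo l, hence
  one-to-one, as Z_l^V is finite. Since N = J - B, with J the all-ones matrix and B the
  adjacency matrix of the complement, every integer vector x with B x = 0 and coordinate
  sum 0 vanishes modulo l.

  On a component of the complement that is an odd path p_0, ..., p_(k-1), the vector with
  entry cos (i pi / 2) = 1, 0, -1, 0, 1, ... at p_i satisfies B x = 0, and its coordinate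
  sum is 0 for k = 3 and 1 for k = 1 (mod 4). This gives (1) directly and (2) by taking
  the difference of the vectors of two such components.

  For (3), if such a path has at least five vertices, adding the edge p_3 p_4 to G keeps
  it N-AW, contradicting extremality: for a kernel vector y of the new graph, comparing
  the rows of p_0 and p_2 gives y p_3 = 0, and moving the weight y p_4 from p_2 to p_0
  turns y into a kernel vector of G.
*)

definition nbhd_sum :: "'a set \<Rightarrow> ('a \<Rightarrow> 'a \<Rightarrow> bool) \<Rightarrow> ('a \<Rightarrow> int) \<Rightarrow> 'a \<Rightarrow> int" where
  "nbhd_sum V R x v = (\<Sum>w\<in>{w\<in>V. R v w}. x w)"

definition nbhd_sum_mod :: "'a set \<Rightarrow> ('a \<Rightarrow> 'a \<Rightarrow> bool) \<Rightarrow> int \<Rightarrow> ('a \<Rightarrow> int) \<Rightarrow> 'a \<Rightarrow> int" where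
  "nbhd_sum_mod V R L x = (\<lambda>v\<in>V. nbhd_sum V R x v mod L)"

definition solvable_mod :: "int \<Rightarrow> 'a set \<Rightarrow> ('a \<Rightarrow> 'a \<Rightarrow> bool) \<Rightarrow> bool" where
  "solvable_mod L V R \<longleftrightarrow>
    (\<forall>f. \<exists>t :: 'a \<Rightarrow> nat. \<forall>v\<in>V. [f v + nbhd_sum V R (\<lambda>w. int (t w)) v = 0] (mod L))"

definition trivial_kernel_mod :: "int \<Rightarrow> 'a set \<Rightarrow> ('a \<Rightarrow> 'a \<Rightarrow> bool) \<Rightarrow> bool" where
  "trivial_kernel_mod L V R \<longleftrightarrow> (\<forall>x. (\<forall>v\<in>V. L dvd nbhd_sum V R x v) \<longrightarrow> (\<forall>v\<in>V. L dvd x v))"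

lemma nbhd_sum_cong_mod:
  assumes "\<And>w. w \<in> V \<Longrightarrow> [x w = y w] (mod L)"
  shows "[nbhd_sum V R x v = nbhd_sum V R y v] (mod L)"
  unfolding nbhd_sum_def using assms by (intro cong_sum) auto

lemma nbhd_sum_diff: "nbhd_sum V R (\<lambda>w. x w - y w) v = nbhd_sum V R x v - nbhd_sum V R y v"
  unfolding nbhd_sum_def by (simp add: sum_subtractf)

lemma nbhd_sum_add_point:
  assumes "finite V" and "u \<in> V"
  shows "nbhd_sum V R (\<lambda>z. y z + (if z = u then c else 0)) v = nbhd_sum V R y v + (if R v u then c else 0)"
  using assms by (simp add: nbhd_sum_def sum.distrib sum.delta)

lemma nbhd_sum_shift:
  assumes "finite V" and "u \<in> V" and "v \<in> V" and "w \<noteq> a"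
    and "\<And>z. R z u \<longleftrightarrow> z = w" and "\<And>z. R z v \<longleftrightarrow> z = w \<or> z = a"
  shows "nbhd_sum V R (\<lambda>z. y z + (if z = u then c else 0) + (if z = v then - c else 0)) z
    = nbhd_sum V R y z - (if z = a then c else 0)"
  using assms by (simp add: nbhd_sum_add_point)

lemma nbhd_sum_mod_in_residues: "0 < L \<Longrightarrow> nbhd_sum_mod V R L x \<in> V \<rightarrow>\<^sub>E {0..<L}"
  unfolding nbhd_sum_mod_def by auto

lemma solvable_mod_iff_surj:
  assumes L: "0 < L"
  shows "solvable_mod L V R \<longleftrightarrow> V \<rightarrow>\<^sub>E {0..<L} \<subseteq> nbhd_sum_mod V R L ` (V \<rightarrow>\<^sub>E {0..<L})"
  unfolding solvable_mod_def
proof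
  assume solvable: "\<forall>f. \<exists>t :: 'a \<Rightarrow> nat. \<forall>v\<in>V. [f v + nbhd_sum V R (\<lambda>w. int (t w)) v = 0] (mod L)"
  show "V \<rightarrow>\<^sub>E {0..<L} \<subseteq> nbhd_sum_mod V R L ` (V \<rightarrow>\<^sub>E {0..<L})"
  proof
    fix z assume z: "z \<in> V \<rightarrow>\<^sub>E {0..<L}"
    obtain t :: "'a \<Rightarrow> nat" where t: "\<forall>v\<in>V. [- z v + nbhd_sum V R (\<lambda>w. int (t w)) v = 0] (mod L)"
      using spec[OF solvable, of "\<lambda>v. - z v"] by fast
    define s where "s = (\<lambda>w\<in>V. int (t w) mod L)"
    have "nbhd_sum_mod V R L s = z"
    proof (rule PiE_ext[OF nbhd_sum_mod_in_residues[OF L] z])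
      fix v assume v: "v \<in> V"
      have "[nbhd_sum V R s v = nbhd_sum V R (\<lambda>w. int (t w)) v] (mod L)"
        by (rule nbhd_sum_cong_mod) (simp add: s_def)
      also have "[nbhd_sum V R (\<lambda>w. int (t w)) v = z v] (mod L)"
        using t v by (simp add: cong_iff_dvd_diff cong_0_iff)
      finally show "nbhd_sum_mod V R L s v = z v"
        using z v by (simp add: nbhd_sum_mod_def cong_def PiE_iff)
    qed
    moreover have "s \<in> V \<rightarrow>\<^sub>E {0..<L}" using L by (simp add: s_def)
    ultimately show "z \<in> nbhd_sum_mod V R L ` (V \<rightarrow>\<^sub>E {0..<L})" by blast
  qed
next
  assume surj: "V \<rightarrow>\<^sub>E {0..<L} \<subseteq> nbhd_sum_mod V R L ` (V \<rightarrow>\<^sub>E {0..<L})"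
  show "\<forall>f. \<exists>t :: 'a \<Rightarrow> nat. \<forall>v\<in>V. [f v + nbhd_sum V R (\<lambda>w. int (t w)) v = 0] (mod L)"
  proof
    fix f :: "'a \<Rightarrow> int"
    have "(\<lambda>v\<in>V. - f v mod L) \<in> V \<rightarrow>\<^sub>E {0..<L}" using L by simp
    with surj have "(\<lambda>v\<in>V. - f v mod L) \<in> nbhd_sum_mod V R L ` (V \<rightarrow>\<^sub>E {0..<L})"
      by (rule subsetD)
    then obtain s where s: "s \<in> V \<rightarrow>\<^sub>E {0..<L}" and sf: "(\<lambda>v\<in>V. - f v mod L) = nbhd_sum_mod V R L s"
      by (rule imageE)
    have "[f v + nbhd_sum V R (\<lambda>w. int (nat (s w))) v = 0] (mod L)" if v: "v \<in> V" for v
    proof -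
      have nat_s: "nbhd_sum V R (\<lambda>w. int (nat (s w))) v = nbhd_sum V R s v"
        unfolding nbhd_sum_def using s by (intro sum.cong) (auto simp: PiE_iff)
      have "[nbhd_sum V R s v = - f v] (mod L)"
        using fun_cong[OF sf, of v] v by (simp add: nbhd_sum_mod_def cong_def)
      then have "[f v + nbhd_sum V R (\<lambda>w. int (nat (s w))) v = f v + - f v] (mod L)"
        unfolding nat_s by (rule cong_add[OF cong_refl])
      then show ?thesis by simp
    qed
    then show "\<exists>t :: 'a \<Rightarrow> nat. \<forall>v\<in>V. [f v + nbhd_sum V R (\<lambda>w. int (t w)) v = 0] (mod L)"
      by (intro exI[of _ "\<lambda>w. nat (s w)"] ballI)
  qed
qed

lemma trivial_kernel_mod_iff_inj:
  assumes L: "0 < L"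
  shows "trivial_kernel_mod L V R \<longleftrightarrow> inj_on (nbhd_sum_mod V R L) (V \<rightarrow>\<^sub>E {0..<L})"
  unfolding trivial_kernel_mod_def
proof
  assume ker: "\<forall>x. (\<forall>v\<in>V. L dvd nbhd_sum V R x v) \<longrightarrow> (\<forall>v\<in>V. L dvd x v)"
  show "inj_on (nbhd_sum_mod V R L) (V \<rightarrow>\<^sub>E {0..<L})"
  proof (rule inj_onI)
    fix x y assume x: "x \<in> V \<rightarrow>\<^sub>E {0..<L}" and y: "y \<in> V \<rightarrow>\<^sub>E {0..<L}"
      and eq: "nbhd_sum_mod V R L x = nbhd_sum_mod V R L y"
    have "L dvd nbhd_sum V R (\<lambda>w. x w - y w) v" if "v \<in> V" for v
      using fun_cong[OF eq, of v] that by (simp add: nbhd_sum_mod_def nbhd_sum_diff mod_eq_dvd_iff)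
    then have "L dvd x v - y v" if "v \<in> V" for v using ker that by blast
    then show "x = y"
      using x y by (intro PiE_ext[OF x y] cong_less_imp_eq_int) (auto simp: cong_iff_dvd_diff PiE_iff)
  qed
next
  assume inj: "inj_on (nbhd_sum_mod V R L) (V \<rightarrow>\<^sub>E {0..<L})"
  show "\<forall>x. (\<forall>v\<in>V. L dvd nbhd_sum V R x v) \<longrightarrow> (\<forall>v\<in>V. L dvd x v)"
  proof (intro allI impI ballI)
    fix x v assume ker: "\<forall>v\<in>V. L dvd nbhd_sum V R x v" and v: "v \<in> V"
    define r where "r = (\<lambda>w\<in>V. x w mod L)"
    define z :: "'a \<Rightarrow> int" where "z = (\<lambda>w\<in>V. 0)"
    have "nbhd_sum_mod V R L r = nbhd_sum_mod V R L z"
    proof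
      fix u
      have "[nbhd_sum V R r u = nbhd_sum V R x u] (mod L)"
        by (rule nbhd_sum_cong_mod) (simp add: r_def)
      moreover have "nbhd_sum V R z u = 0" by (simp add: nbhd_sum_def z_def)
      ultimately show "nbhd_sum_mod V R L r u = nbhd_sum_mod V R L z u"
        using ker by (simp add: nbhd_sum_mod_def cong_def)
    qed
    moreover have "r \<in> V \<rightarrow>\<^sub>E {0..<L}" "z \<in> V \<rightarrow>\<^sub>E {0..<L}" using L by (simp_all add: r_def z_def)
    ultimately have "r = z" using inj by (simp add: inj_on_def)
    then have "r v = z v" by simp
    then show "L dvd x v" using v by (simp add: r_def z_def dvd_eq_mod_eq_0)
  qed
qed

lemma solvable_mod_iff_trivial_kernel_mod:
  assumes "finite V" and "0 < L"
  shows "solvable_mod L V R \<longleftrightarrow> trivial_kernel_mod L V R"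
proof -
  have fin: "finite (V \<rightarrow>\<^sub>E {0..<L})" using assms(1) by (simp add: finite_PiE)
  have endo: "nbhd_sum_mod V R L ` (V \<rightarrow>\<^sub>E {0..<L}) \<subseteq> V \<rightarrow>\<^sub>E {0..<L}"
    by (intro image_subsetI nbhd_sum_mod_in_residues[OF assms(2)])
  show ?thesis
    unfolding solvable_mod_iff_surj[OF assms(2)] trivial_kernel_mod_iff_inj[OF assms(2)]
    using finite_surj_inj[OF fin] endo_inj_surj[OF fin endo] by blast
qed

lemma nbhd_sum_closed_nbhd:
  assumes "graph V E" and "v \<in> V"
  shows "nbhd_sum V (\<lambda>v w. v \<in> closed_nbhd V E w) x v = sum x V - nbhd_sum V (compl_graph V E) x v"
proof -
  have "{w\<in>V. v \<in> closed_nbhd V E w} = V - {w\<in>V. compl_graph V E v w}"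
    using assms unfolding graph_def closed_nbhd_def compl_graph_def by auto
  moreover have "finite V" using assms(1) by (simp add: graph_def)
  ultimately show ?thesis unfolding nbhd_sum_def by (simp add: sum_diff)
qed

lemma N_AW_iff_compl_kernel_trivial:
  assumes g: "graph V E" and "0 < l"
  shows "N_AW l V E \<longleftrightarrow>
    (\<forall>x. (\<forall>v\<in>V. int l dvd sum x V - nbhd_sum V (compl_graph V E) x v) \<longrightarrow> (\<forall>v\<in>V. int l dvd x v))"
proof -
  have "N_AW l V E \<longleftrightarrow> solvable_mod (int l) V (\<lambda>v w. v \<in> closed_nbhd V E w)"
    by (simp add: N_AW_def solvable_mod_def nbhd_sum_def)
  also have "\<dots> \<longleftrightarrow> trivial_kernel_mod (int l) V (\<lambda>v w. v \<in> closed_nbhd V E w)"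
    using g assms(2) by (intro solvable_mod_iff_trivial_kernel_mod) (simp_all add: graph_def)
  finally show ?thesis by (simp add: trivial_kernel_mod_def nbhd_sum_closed_nbhd[OF g])
qed

lemma N_AW_dvd_if_compl_kernel:
  assumes "graph V E" and "0 < l" and "N_AW l V E"
    and "sum x V = 0" and "\<And>v. v \<in> V \<Longrightarrow> nbhd_sum V (compl_graph V E) x v = 0" and "v \<in> V"
  shows "int l dvd x v"
  using assms N_AW_iff_compl_kernel_trivial[OF assms(1,2)] by simp

lemma symp_compl_graph: "graph V E \<Longrightarrow> symp (compl_graph V E)"
  unfolding graph_def compl_graph_def by (auto intro: sympI)

lemma compl_graph_iff_mem_nbhd:
  assumes "graph V E" and "{z\<in>V. compl_graph V E u z} = N"
  shows "compl_graph V E z u \<longleftrightarrow> z \<in> N"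
  unfolding assms(2)[symmetric] using assms(1) by (auto simp: compl_graph_def graph_def)

lemma component_subset:
  assumes "component V R C" and "\<And>x y. R x y \<Longrightarrow> y \<in> V"
  shows "C \<subseteq> V"
proof
  fix y assume "y \<in> C"
  from assms(1) obtain x where "x \<in> V" and "C = {y. R\<^sup>*\<^sup>* x y}" by (auto simp: component_def)
  with \<open>y \<in> C\<close> have "R\<^sup>*\<^sup>* x y" by simp
  then show "y \<in> V" using \<open>x \<in> V\<close> by (induction rule: rtranclp_induct) (auto intro: assms(2))
qed

lemma component_closed: "component V R C \<Longrightarrow> u \<in> C \<Longrightarrow> R u w \<Longrightarrow> w \<in> C"
  by (auto simp: component_def)

lemma component_eq_reachable:
  assumes "symp R" and "component V R C" and "z \<in> C"
  shows "C = {y. R\<^sup>*\<^sup>* z y}"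
proof -
  from assms(2) obtain x where C: "C = {y. R\<^sup>*\<^sup>* x y}" by (auto simp: component_def)
  with assms(3) have "R\<^sup>*\<^sup>* x z" by simp
  moreover have "R\<^sup>*\<^sup>* z x" using calculation symp_rtranclp[OF assms(1)] by (blast dest: sympD)
  ultimately show ?thesis unfolding C by (blast intro: rtranclp_trans)
qed

lemma components_disjoint:
  assumes "symp R" and "component V R C1" and "component V R C2" and "C1 \<noteq> C2"
  shows "C1 \<inter> C2 = {}"
  using assms component_eq_reachable[OF assms(1)] by blast

definition cos_half_pi :: "nat \<Rightarrow> int" where
  "cos_half_pi i = (if i mod 4 = 0 then 1 else if i mod 4 = 2 then -1 else 0)"

lemma sum_cos_half_pi: "(\<Sum>i<k. cos_half_pi i) = (if k mod 4 = 1 \<or> k mod 4 = 2 then 1 else 0)"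
proof (induction k)
  case (Suc k)
  have "k mod 4 = 0 \<or> k mod 4 = 1 \<or> k mod 4 = 2 \<or> k mod 4 = 3" by presburger
  moreover have "Suc k mod 4 = (if k mod 4 = 3 then 0 else Suc (k mod 4))" by presburger
  ultimately show ?case using Suc by (auto simp: cos_half_pi_def)
qed simp

lemma sum_cos_half_pi_path_nbhd:
  assumes "odd k" and "j < k"
  shows "(\<Sum>i<k. if j = Suc i \<or> i = Suc j then cos_half_pi i else 0) = 0"
proof (cases "even j")
  case True
  then have "cos_half_pi i = 0" if "j = Suc i \<or> i = Suc j" for i
    using that by (auto simp: cos_half_pi_def) presburger+
  then show ?thesis by (intro sum.neutral) auto
next
  case False
  then obtain m where m: "j = Suc m" "even m" by (cases j) auto
  have "Suc j < k" using assms False by presburger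
  then have "{i\<in>{..<k}. j = Suc i \<or> i = Suc j} = {m, Suc (Suc m)}" using m by auto
  moreover have "cos_half_pi m + cos_half_pi (Suc (Suc m)) = 0"
    using \<open>even m\<close> by (auto simp: cos_half_pi_def) presburger+
  ultimately show ?thesis by (simp add: sum.inter_filter[symmetric])
qed

definition path_signs :: "(nat \<Rightarrow> 'a) \<Rightarrow> nat \<Rightarrow> 'a \<Rightarrow> int" where
  "path_signs p k w = (\<Sum>i<k. if w = p i then cos_half_pi i else 0)"

lemma sum_path_signs:
  "finite W \<Longrightarrow> sum (path_signs p k) W = (\<Sum>i<k. if p i \<in> W then cos_half_pi i else 0)"
  unfolding path_signs_def by (subst sum.swap) (simp add: sum.delta)

locale induced_path_component =
  fixes V :: "'a set" and R :: "'a \<Rightarrow> 'a \<Rightarrow> bool" and C :: "'a set" and p :: "nat \<Rightarrow> 'a" and k :: nat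
  assumes sym: "symp R"
    and subset: "C \<subseteq> V"
    and closed: "\<And>u w. u \<in> C \<Longrightarrow> R u w \<Longrightarrow> w \<in> C"
    and bij: "bij_betw p {0..<k} C"
    and adj: "\<And>i j. i < k \<Longrightarrow> j < k \<Longrightarrow> R (p i) (p j) \<longleftrightarrow> i = Suc j \<or> j = Suc i"
begin

lemma p_in_C: "i < k \<Longrightarrow> p i \<in> C"
  using bij by (auto simp: bij_betw_def)

lemma p_in_V: "i < k \<Longrightarrow> p i \<in> V"
  using p_in_C subset by blast

lemma p_eq_iff: "i < k \<Longrightarrow> j < k \<Longrightarrow> p i = p j \<longleftrightarrow> i = j"
  using bij by (auto simp: bij_betw_def inj_on_def)

lemma C_eq_image: "C = p ` {..<k}"
  using bij by (auto simp: bij_betw_def atLeast0LessThan)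

lemma nbhd_path_vertex:
  assumes "i < k"
  shows "{w\<in>V. R (p i) w} = p ` {j. j < k \<and> (j = Suc i \<or> i = Suc j)}"
proof (intro equalityI subsetI)
  fix w assume w: "w \<in> {w\<in>V. R (p i) w}"
  then obtain j where "j < k" "w = p j" using closed[OF p_in_C[OF assms]] by (auto simp: C_eq_image)
  then show "w \<in> p ` {j. j < k \<and> (j = Suc i \<or> i = Suc j)}" using w adj[OF assms] by auto
qed (use assms adj p_in_V in auto)

lemma path_signs_outside: "w \<notin> C \<Longrightarrow> path_signs p k w = 0"
  using p_in_C by (auto simp: path_signs_def intro!: sum.neutral)

lemma path_signs_first: "0 < k \<Longrightarrow> path_signs p k (p 0) = 1"
  unfolding path_signs_def using p_eq_iff by (simp add: sum.delta cos_half_pi_def)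

lemma sum_path_signs_V: "finite V \<Longrightarrow> sum (path_signs p k) V = (\<Sum>i<k. cos_half_pi i)"
  using p_in_V by (simp add: sum_path_signs)

lemma nbhd_sum_path_signs:
  assumes "finite V" and "odd k"
  shows "nbhd_sum V R (path_signs p k) v = 0"
proof (cases "v \<in> C")
  case True
  then obtain j where j: "j < k" "v = p j" by (auto simp: C_eq_image)
  have "nbhd_sum V R (path_signs p k) v = (\<Sum>i<k. if p i \<in> {w\<in>V. R (p j) w} then cos_half_pi i else 0)"
    unfolding nbhd_sum_def j(2) using assms(1) by (simp add: sum_path_signs)
  also have "\<dots> = (\<Sum>i<k. if j = Suc i \<or> i = Suc j then cos_half_pi i else 0)"
    using j(1) p_in_V adj by (intro sum.cong) auto
  also have "\<dots> = 0" using sum_cos_half_pi_path_nbhd[OF assms(2) j(1)] .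
  finally show ?thesis .
next
  case False
  then have "R v w \<Longrightarrow> w \<notin> C" for w using closed sym by (blast dest: sympD)
  then show ?thesis unfolding nbhd_sum_def by (auto intro: sum.neutral path_signs_outside)
qed

end

lemma induced_path_componentE:
  assumes "symp R" and "\<And>x y. R x y \<Longrightarrow> y \<in> V" and "component V R C" and "is_path_on R C k"
  obtains p where "induced_path_component V R C p k"
proof -
  from assms(4) obtain p where "bij_betw p {0..<k} C"
    and "\<forall>i<k. \<forall>j<k. R (p i) (p j) \<longleftrightarrow> i = Suc j \<or> j = Suc i"
    by (auto simp: is_path_on_def)
  moreover have "C \<subseteq> V" using assms(2) by (rule component_subset[OF assms(3)])
  ultimately have "induced_path_component V R C p k"
    using assms(1) component_closed[OF assms(3)] by (simp add: induced_path_component_def)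
  then show thesis by (rule that)
qed

lemma compl_path_componentE:
  assumes "graph V E" and "component V (compl_graph V E) C" and "is_path_on (compl_graph V E) C k"
  obtains p where "induced_path_component V (compl_graph V E) C p k"
  using symp_compl_graph[OF assms(1)] _ assms(2,3) by (rule induced_path_componentE) (simp add: compl_graph_def)

lemma compl_path_component_mod4_ne_3:
  assumes "2 \<le> l" and g: "graph V E" and aw: "N_AW l V E"
    and C: "component V (compl_graph V E) C" and path: "is_path_on (compl_graph V E) C k"
  shows "k mod 4 \<noteq> 3"
proof
  assume k: "k mod 4 = 3"
  obtain p where "induced_path_component V (compl_graph V E) C p k"
    using g C path by (rule compl_path_componentE)
  then interpret induced_path_component V "compl_graph V E" C p k .
  have fin: "finite V" using g by (simp add: graph_def)
  have odd: "odd k" and pos: "0 < k" using k by presburger+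
  have "int l dvd path_signs p k (p 0)"
  proof (rule N_AW_dvd_if_compl_kernel[OF g _ aw])
    show "sum (path_signs p k) V = 0"
      using k by (simp add: sum_path_signs_V[OF fin] sum_cos_half_pi)
    show "nbhd_sum V (compl_graph V E) (path_signs p k) v = 0" for v
      by (rule nbhd_sum_path_signs[OF fin odd])
  qed (use assms(1) p_in_V[OF pos] in auto)
  then show False using path_signs_first[OF pos] assms(1) by simp
qed

lemma compl_path_components_mod4_eq_1_unique:
  assumes "2 \<le> l" and g: "graph V E" and aw: "N_AW l V E"
    and C1: "component V (compl_graph V E) C1" and path1: "is_path_on (compl_graph V E) C1 k1"
    and C2: "component V (compl_graph V E) C2" and path2: "is_path_on (compl_graph V E) C2 k2"
    and k1: "k1 mod 4 = 1" and k2: "k2 mod 4 = 1"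
  shows "C1 = C2"
proof (rule ccontr)
  assume "C1 \<noteq> C2"
  obtain p1 where "induced_path_component V (compl_graph V E) C1 p1 k1"
    using g C1 path1 by (rule compl_path_componentE)
  then interpret P1: induced_path_component V "compl_graph V E" C1 p1 k1 .
  obtain p2 where "induced_path_component V (compl_graph V E) C2 p2 k2"
    using g C2 path2 by (rule compl_path_componentE)
  then interpret P2: induced_path_component V "compl_graph V E" C2 p2 k2 .
  have fin: "finite V" using g by (simp add: graph_def)
  have odd: "odd k1" "odd k2" and pos: "0 < k1" using k1 k2 by presburger+
  define x where "x w = path_signs p1 k1 w - path_signs p2 k2 w" for w
  have "int l dvd x (p1 0)"
  proof (rule N_AW_dvd_if_compl_kernel[OF g _ aw])
    show "sum x V = 0"
      using k1 k2 by (simp add: x_def sum_subtractf P1.sum_path_signs_V P2.sum_path_signs_V fin sum_cos_half_pi)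
    show "nbhd_sum V (compl_graph V E) x v = 0" for v
      unfolding x_def nbhd_sum_diff using P1.nbhd_sum_path_signs P2.nbhd_sum_path_signs fin odd by simp
  qed (use assms(1) P1.p_in_V[OF pos] in auto)
  moreover have "p1 0 \<notin> C2"
    using P1.p_in_C[OF pos] components_disjoint[OF symp_compl_graph[OF g] C1 C2 \<open>C1 \<noteq> C2\<close>] by blast
  ultimately show False
    using assms(1) P1.path_signs_first[OF pos] P2.path_signs_outside by (simp add: x_def)
qed

definition graph_image :: "('a \<Rightarrow> 'b) \<Rightarrow> 'a set \<Rightarrow> ('a \<Rightarrow> 'a \<Rightarrow> bool) \<Rightarrow> 'b \<Rightarrow> 'b \<Rightarrow> bool" where
  "graph_image h V E x y \<longleftrightarrow> (\<exists>u\<in>V. \<exists>w\<in>V. E u w \<and> x = h u \<and> y = h w)"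

lemma graph_image_iff:
  "inj_on h V \<Longrightarrow> u \<in> V \<Longrightarrow> w \<in> V \<Longrightarrow> graph_image h V E (h u) (h w) \<longleftrightarrow> E u w"
  by (auto simp: graph_image_def inj_on_def)

lemma graph_graph_image: "inj_on h V \<Longrightarrow> graph V E \<Longrightarrow> graph (h ` V) (graph_image h V E)"
  unfolding graph_def graph_image_def inj_on_def by blast

lemma edges_graph_image: "edges (h ` V) (graph_image h V E) = image h ` edges V E"
proof (intro equalityI subsetI)
  fix e assume "e \<in> edges (h ` V) (graph_image h V E)"
  then obtain u w where "u \<in> V" "w \<in> V" "E u w" "e = h ` {u, w}"
    by (auto simp: edges_def graph_image_def)
  moreover from calculation have "{u, w} \<in> edges V E" by (auto simp: edges_def)
  ultimately show "e \<in> image h ` edges V E" by blast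
qed (auto simp: edges_def graph_image_def)

lemma card_edges_graph_image:
  assumes "inj_on h V"
  shows "card (edges (h ` V) (graph_image h V E)) = card (edges V E)"
proof -
  have "inj_on (image h) (edges V E)"
    using inj_on_image_Pow[OF assms] by (rule inj_on_subset) (auto simp: edges_def)
  then show ?thesis by (simp add: edges_graph_image card_image)
qed

lemma closed_nbhd_graph_image:
  assumes "inj_on h V" and "w \<in> V"
  shows "closed_nbhd (h ` V) (graph_image h V E) (h w) = h ` closed_nbhd V E w"
  using assms graph_image_iff[OF assms(1)] by (auto simp: closed_nbhd_def inj_on_def)

lemma N_AW_graph_image:
  assumes inj: "inj_on h V" and aw: "N_AW l V E"
  shows "N_AW l (h ` V) (graph_image h V E)"
  unfolding N_AW_def
proof
  fix f :: "'b \<Rightarrow> int"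
  obtain t :: "'a \<Rightarrow> nat"
    where t: "\<forall>v\<in>V. [f (h v) + (\<Sum>w\<in>{w\<in>V. v \<in> closed_nbhd V E w}. int (t w)) = 0] (mod int l)"
    using spec[OF aw[unfolded N_AW_def], of "\<lambda>v. f (h v)"] by fast
  have "[f (h v) + (\<Sum>w'\<in>{w'\<in>h ` V. h v \<in> closed_nbhd (h ` V) (graph_image h V E) w'}.
      int (t (inv_into V h w'))) = 0] (mod int l)" if v: "v \<in> V" for v
  proof -
    have "h v \<in> closed_nbhd (h ` V) (graph_image h V E) (h w) \<longleftrightarrow> v \<in> closed_nbhd V E w"
      if "w \<in> V" for w
      unfolding closed_nbhd_graph_image[OF inj that]
      by (rule inj_on_image_mem_iff[OF inj v]) (auto simp: closed_nbhd_def)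
    then have "{w'\<in>h ` V. h v \<in> closed_nbhd (h ` V) (graph_image h V E) w'} = h ` {w\<in>V. v \<in> closed_nbhd V E w}"
      by auto
    moreover have "inj_on h {w\<in>V. v \<in> closed_nbhd V E w}" using inj by (rule inj_on_subset) auto
    ultimately show ?thesis using t v inj by (simp add: sum.reindex)
  qed
  then show "\<exists>t :: 'b \<Rightarrow> nat. \<forall>v'\<in>h ` V.
      [f v' + (\<Sum>w'\<in>{w'\<in>h ` V. v' \<in> closed_nbhd (h ` V) (graph_image h V E) w'}. int (t w')) = 0] (mod int l)"
    by (intro exI[of _ "\<lambda>w'. t (inv_into V h w')"]) auto
qed

lemma edges_subset_Pow: "edges V E \<subseteq> Pow V"
  by (auto simp: edges_def)

lemma card_edges_le_pow: "finite V \<Longrightarrow> card (edges V E) \<le> 2 ^ card V"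
  using card_mono[OF _ edges_subset_Pow, of V E] by (simp add: card_Pow)

lemma card_edges_le_max_edges:
  assumes g: "graph V E" and aw: "N_AW l V E"
  shows "card (edges V E) \<le> max_edges (card V) l"
proof -
  have "finite V" using g by (simp add: graph_def)
  then obtain h :: "'a \<Rightarrow> nat" where inj: "inj_on h V" using finite_imp_inj_to_nat_seg by blast
  let ?counts = "{card (edges V' E') | (V' :: nat set) E'. graph V' E' \<and> card V' = card V \<and> N_AW l V' E'}"
  have "card (edges V E) = card (edges (h ` V) (graph_image h V E))"
    by (simp add: card_edges_graph_image[OF inj])
  then have mem: "card (edges V E) \<in> ?counts"
    using graph_graph_image[OF inj g] N_AW_graph_image[OF inj aw] card_image[OF inj] by blast
  have fin: "finite ?counts"
    by (rule finite_subset[of _ "{..2 ^ card V}"]) (auto simp: graph_def dest!: card_edges_le_pow)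
  show ?thesis unfolding max_edges_def by (rule Max_ge[OF fin mem])
qed

definition insert_edge :: "'a \<Rightarrow> 'a \<Rightarrow> ('a \<Rightarrow> 'a \<Rightarrow> bool) \<Rightarrow> 'a \<Rightarrow> 'a \<Rightarrow> bool" where
  "insert_edge a b E x y \<longleftrightarrow> E x y \<or> {x, y} = {a, b}"

lemma graph_insert_edge:
  assumes "graph V E" and "compl_graph V E a b"
  shows "graph V (insert_edge a b E)"
  using assms unfolding graph_def compl_graph_def insert_edge_def by (auto simp: doubleton_eq_iff)

lemma compl_graph_insert_edge:
  "compl_graph V (insert_edge a b E) x y \<longleftrightarrow> compl_graph V E x y \<and> {x, y} \<noteq> {a, b}"
  by (auto simp: compl_graph_def insert_edge_def)

lemma card_edges_insert_edge:
  assumes g: "graph V E" and ab: "compl_graph V E a b"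
  shows "card (edges V (insert_edge a b E)) = Suc (card (edges V E))"
proof -
  have "edges V (insert_edge a b E) = insert {a, b} (edges V E)"
    using ab by (auto simp: edges_def compl_graph_def insert_edge_def)
  moreover have "{a, b} \<notin> edges V E"
    using g ab by (auto simp: edges_def compl_graph_def graph_def doubleton_eq_iff)
  moreover have "finite (edges V E)"
    using g by (intro finite_subset[OF edges_subset_Pow]) (simp add: graph_def)
  ultimately show ?thesis by simp
qed

lemma nbhd_sum_compl_insert_edge:
  assumes g: "graph V E" and ab: "compl_graph V E a b"
  shows "nbhd_sum V (compl_graph V E) y v
    = nbhd_sum V (compl_graph V (insert_edge a b E)) y v
      + (if v = a then y b else 0) + (if v = b then y a else 0)"
proof -
  let ?N' = "{w\<in>V. compl_graph V (insert_edge a b E) v w}"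
  have fin: "finite ?N'" using g by (simp add: graph_def)
  have ab': "a \<noteq> b" "a \<in> V" "b \<in> V" using ab by (auto simp: compl_graph_def)
  consider "v = a" | "v = b" | "v \<notin> {a, b}" by blast
  then show ?thesis
  proof cases
    case 1
    then have "{w\<in>V. compl_graph V E v w} = insert b ?N'" "b \<notin> ?N'"
      using ab ab' by (auto simp: compl_graph_insert_edge doubleton_eq_iff)
    then show ?thesis using fin 1 ab' by (simp add: nbhd_sum_def)
  next
    case 2
    then have "{w\<in>V. compl_graph V E v w} = insert a ?N'" "a \<notin> ?N'"
      using ab ab' symp_compl_graph[OF g] by (auto simp: compl_graph_insert_edge doubleton_eq_iff dest: sympD)
    then show ?thesis using fin 2 ab' by (simp add: nbhd_sum_def)
  next
    case 3
    then have "{w\<in>V. compl_graph V E v w} = ?N'"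
      by (auto simp: compl_graph_insert_edge doubleton_eq_iff)
    then show ?thesis using 3 by (simp add: nbhd_sum_def)
  qed
qed

lemma N_AW_insert_edge:
  assumes g: "graph V E" and l: "0 < l" and aw: "N_AW l V E"
    and ab: "compl_graph V E a b"
    and Nu: "{z\<in>V. compl_graph V E u z} = {w}" and Nv: "{z\<in>V. compl_graph V E v z} = {w, a}"
    and u: "u \<notin> {a, b}" and v: "v \<notin> {a, b}" and "w \<noteq> a"
  shows "N_AW l V (insert_edge a b E)"
  unfolding N_AW_iff_compl_kernel_trivial[OF graph_insert_edge[OF g ab] l]
proof (intro allI impI)
  fix y
  assume ker': "\<forall>z\<in>V. int l dvd sum y V - nbhd_sum V (compl_graph V (insert_edge a b E)) y z"
  have fin: "finite V" using g by (simp add: graph_def)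
  have adj_u: "compl_graph V E z u \<longleftrightarrow> z = w" and adj_v: "compl_graph V E z v \<longleftrightarrow> z = w \<or> z = a" for z
    using compl_graph_iff_mem_nbhd[OF g Nu] compl_graph_iff_mem_nbhd[OF g Nv] by simp_all
  have in_V: "u \<in> V" "v \<in> V" using adj_u[of w] adj_v[of w] by (simp_all add: compl_graph_def)
  note nbhd_sum_E = nbhd_sum_compl_insert_edge[OF g ab]
  have "int l dvd sum y V - y w" "int l dvd sum y V - (y w + y a)"
    using ker' in_V u v nbhd_sum_E[of y u] nbhd_sum_E[of y v] Nu Nv \<open>w \<noteq> a\<close>
    by (simp_all add: nbhd_sum_def)
  from dvd_diff[OF this] have ya: "int l dvd y a" by simp
  define x where "x z = y z + (if z = u then y b else 0) + (if z = v then - y b else 0)" for z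
  have "sum x V = sum y V"
    using fin in_V by (simp add: x_def sum.distrib)
  moreover have "nbhd_sum V (compl_graph V E) x z = nbhd_sum V (compl_graph V E) y z - (if z = a then y b else 0)"
    for z unfolding x_def using fin in_V \<open>w \<noteq> a\<close> adj_u adj_v by (rule nbhd_sum_shift)
  ultimately have "sum x V - nbhd_sum V (compl_graph V E) x z
      = sum y V - nbhd_sum V (compl_graph V (insert_edge a b E)) y z - (if z = b then y a else 0)" for z
    by (simp add: nbhd_sum_E)
  with ker' ya have "\<forall>z\<in>V. int l dvd sum x V - nbhd_sum V (compl_graph V E) x z"
    by (auto intro: dvd_diff)
  then have x: "\<forall>z\<in>V. int l dvd x z"
    using aw N_AW_iff_compl_kernel_trivial[OF g l] by blast
  have "x b = y b" using u v by (auto simp: x_def)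
  then have yb: "int l dvd y b" using x ab by (metis compl_graph_def)
  show "\<forall>z\<in>V. int l dvd y z"
  proof
    fix z assume "z \<in> V"
    have "y z = x z - (if z = u then y b else 0) + (if z = v then y b else 0)" by (simp add: x_def)
    also have "int l dvd \<dots>" using x \<open>z \<in> V\<close> yb by (intro dvd_add dvd_diff) auto
    finally show "int l dvd y z" .
  qed
qed

lemma extremal_compl_path_component_le_4:
  assumes l: "0 < l" and ext: "extremal n l V E"
    and C: "component V (compl_graph V E) C" and path: "is_path_on (compl_graph V E) C k"
  shows "k \<le> 4"
proof (rule ccontr)
  assume "\<not> k \<le> 4"
  then have k: "4 < k" by simp
  from ext have g: "graph V E" and aw: "N_AW l V E" and max: "card (edges V E) = max_edges (card V) l"
    by (auto simp: extremal_def)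
  obtain p where "induced_path_component V (compl_graph V E) C p k"
    using g C path by (rule compl_path_componentE)
  then interpret induced_path_component V "compl_graph V E" C p k .
  have "{j. j < k \<and> (j = Suc 0 \<or> 0 = Suc j)} = {1}" "{j. j < k \<and> (j = Suc 2 \<or> 2 = Suc j)} = {1, 3}"
    using k by auto
  then have "{z\<in>V. compl_graph V E (p 0) z} = {p 1}" "{z\<in>V. compl_graph V E (p 2) z} = {p 1, p 3}"
    using nbhd_path_vertex[of 0] nbhd_path_vertex[of 2] k by simp_all
  moreover have "compl_graph V E (p 3) (p 4)" using adj k by simp
  moreover have "p 0 \<notin> {p 3, p 4}" "p 2 \<notin> {p 3, p 4}" "p 1 \<noteq> p 3" using p_eq_iff k by simp_all
  ultimately have "N_AW l V (insert_edge (p 3) (p 4) E)"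
    by (intro N_AW_insert_edge[OF g l aw])
  then have "card (edges V (insert_edge (p 3) (p 4) E)) \<le> max_edges (card V) l"
    by (rule card_edges_le_max_edges[OF graph_insert_edge[OF g \<open>compl_graph V E (p 3) (p 4)\<close>]])
  then show False
    using max card_edges_insert_edge[OF g \<open>compl_graph V E (p 3) (p 4)\<close>] by simp
qed

theorem corollary3p2:
  fixes l n :: nat and V :: "'a set" and E :: "'a \<Rightarrow> 'a \<Rightarrow> bool"
  assumes "l \<ge> 2" and "graph V E" and "card V = n" and "N_AW l V E"
  shows "(\<forall>C k. component V (compl_graph V E) C \<and> is_path_on (compl_graph V E) C k
            \<longrightarrow> k mod 4 \<noteq> 3)
    \<and> (\<forall>C1 C2 k1 k2. component V (compl_graph V E) C1 \<and> is_path_on (compl_graph V E) C1 k1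
          \<and> k1 mod 4 = 1 \<and> component V (compl_graph V E) C2
          \<and> is_path_on (compl_graph V E) C2 k2 \<and> k2 mod 4 = 1 \<longrightarrow> C1 = C2)
    \<and> (extremal n l V E \<longrightarrow> (\<forall>C k. component V (compl_graph V E) C
          \<and> is_path_on (compl_graph V E) C k \<longrightarrow> k \<le> 4))"
proof -
  have "0 < l" using assms(1) by simp
  then show ?thesis
    using compl_path_component_mod4_ne_3[OF assms(1,2,4)]
      compl_path_components_mod4_eq_1_unique[OF assms(1,2,4)]
      extremal_compl_path_component_le_4[of l n V E]
    by blast
qed

end
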